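(* Let $\mathcal{P}$ be a statistical model of mutually equivalent distributions (for all $P_1,P_2\in\mathcal{P}$, $P_1\ll P_2$ and $P_2\ll P_1$). Let $P\in\mathcal{P}$ and $\{P_\epsilon:\epsilon\in[0,\delta)\}\in\mathscr{P}(P,\mathcal{P},s)$. Suppose $\nu:\mathcal{P}\to\mathcal{H}$ is pathwise differentiable at $P$ with an efficient influence function $\phi_P$ that is $P$-almost surely bounded, i.e. $\|\phi_P(Z)\|_{\mathcal{H}}$ is a bounded random variable when $Z\sim P$. Then $\|(P_\epsilon-P)\phi_P-\epsilon\dot{\nu}_P(s)\|_{\mathcal{H}}=o(\epsilon)$ as $\epsilon\to0$.
   Context: $(\mathcal{Z},\mathbf{B})$ is a Polish space, $\mathcal{P}$ dominated by a $\sigma$-finite measure $\lambda$, $\mathcal{H}$ a real separable Hilbert space. For $s\in L^2(P)$, $\mathscr{P}(P,\mathcal{P},s)$ is the set of submodels $\{P_\epsilon:\epsilon\in[0,\delta)\}\subset\mathcal{P}$ with $\|p_\epsilon^{1/2}-p^{1/2}-\epsilon sp^{1/2}/2\|_{L^2(\lambda)}=o(\epsilon)$ ($p_\epsilon,p$ the $\lambda$-densities); tangent set $\{s:\mathscr{P}(P,\mathcal{P},s)\neq\emptyset\}$, tangent space $\dot{\mathcal{P}}_P$ its closed linear span in $L^2(P)$. $\nu$ is pathwise differentiable at $P$ if there is a continuous linear $\dot{\nu}_P:\dot{\mathcal{P}}_P\to\mathcal{H}$ with $\|\nu(P_\epsilon)-\nu(P)-\epsilon\dot{\nu}_P(s)\|_{\mathcal{H}}=o(\epsilon)$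 for every tangent-set $s$ and every submodel in $\mathscr{P}(P,\mathcal{P},s)$; $\dot{\nu}_P^*$ is its adjoint; $\phi_P$ is the efficient influence function if $\dot{\nu}_P^*(h)(z)=\langle h,\phi_P(z)\rangle_{\mathcal{H}}$ for all $h$ and $P$-a.e. $z$. $Q\phi=\int\phi\,dQ$ (Bochner integral). *)

theory Defs
  imports "HOL-Probability.Probability"
begin

definition L2 :: "'z measure \<Rightarrow> ('z \<Rightarrow> real) set" where
  "L2 P = {f. f \<in> borel_measurable P \<and> integrable P (\<lambda>z. (f z)^2)}"

definition l2norm :: "'z measure \<Rightarrow> ('z \<Rightarrow> real) \<Rightarrow> real" where
  "l2norm P f = sqrt (\<integral>z. (f z)^2 \<partial>P)"

definition dens :: "'z measure \<Rightarrow> 'z measure \<Rightarrow> 'z \<Rightarrow> real" where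
  "dens lam Q z = enn2real (RN_deriv lam Q z)"

text \<open>Pe restricted to [0,delta) is a submodel in the set of submodels with score s:
  each Pe eps lies in the model, and
  || p_eps^(1/2) - p^(1/2) - eps s p^(1/2)/2 ||_{L2(lam)} = o(eps) as eps -> 0+.\<close>
definition submodel ::
  "'z measure \<Rightarrow> 'z measure set \<Rightarrow> 'z measure \<Rightarrow> ('z \<Rightarrow> real) \<Rightarrow> (real \<Rightarrow> 'z measure) \<Rightarrow> real \<Rightarrow> bool" where
  "submodel lam Pm P s Pe \<delta> \<longleftrightarrow>
     s \<in> L2 P \<and> \<delta> > 0 \<and> (\<forall>\<epsilon>\<in>{0..<\<delta>}. Pe \<epsilon> \<in> Pm) \<and>
     (\<forall>e>0. eventually (\<lambda>\<epsilon>.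
        (\<integral>\<^sup>+ z. ennreal ((sqrt (dens lam (Pe \<epsilon>) z) - sqrt (dens lam P z)
                             - \<epsilon> * s z * sqrt (dens lam P z) / 2)^2) \<partial>lam)
          \<le> ennreal ((e * \<epsilon>)^2)) (at_right 0))"

definition tangent_set :: "'z measure \<Rightarrow> 'z measure set \<Rightarrow> 'z measure \<Rightarrow> ('z \<Rightarrow> real) set" where
  "tangent_set lam Pm P = {s. s \<in> L2 P \<and> (\<exists>Pe \<delta>. submodel lam Pm P s Pe \<delta>)}"

definition lin_span :: "('z \<Rightarrow> real) set \<Rightarrow> ('z \<Rightarrow> real) set" where
  "lin_span S = {f. \<exists>(n::nat) c g. (\<forall>i<n. g i \<in> S) \<and> f = (\<lambda>z. \<Sum>i<n. c i * g i z)}"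

definition tangent_space :: "'z measure \<Rightarrow> 'z measure set \<Rightarrow> 'z measure \<Rightarrow> ('z \<Rightarrow> real) set" where
  "tangent_space lam Pm P = {g \<in> L2 P. \<forall>e>0. \<exists>h\<in>lin_span (tangent_set lam Pm P).
                                l2norm P (\<lambda>z. g z - h z) < e}"

definition pathwise_derivative ::
  "'z measure \<Rightarrow> 'z measure set \<Rightarrow> ('z measure \<Rightarrow> 'h::real_normed_vector) \<Rightarrow> 'z measure
     \<Rightarrow> (('z \<Rightarrow> real) \<Rightarrow> 'h) \<Rightarrow> bool" where
  "pathwise_derivative lam Pm \<nu> P D \<longleftrightarrow>
     (\<forall>f\<in>tangent_space lam Pm P. \<forall>g\<in>tangent_space lam Pm P. \<forall>a b.
        D (\<lambda>z. a * f z + b * g z) = a *\<^sub>R D f + b *\<^sub>R D g) \<and>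
     (\<exists>K. \<forall>f\<in>tangent_space lam Pm P. norm (D f) \<le> K * l2norm P f) \<and>
     (\<forall>s\<in>tangent_set lam Pm P. \<forall>Pe \<delta>. submodel lam Pm P s Pe \<delta> \<longrightarrow>
        ((\<lambda>\<epsilon>. norm (\<nu> (Pe \<epsilon>) - \<nu> P - \<epsilon> *\<^sub>R D s) / \<epsilon>) \<longlongrightarrow> 0) (at_right 0))"

definition is_adjoint ::
  "'z measure \<Rightarrow> ('z \<Rightarrow> real) set \<Rightarrow> (('z \<Rightarrow> real) \<Rightarrow> 'h::real_inner) \<Rightarrow> ('h \<Rightarrow> 'z \<Rightarrow> real) \<Rightarrow> bool" where
  "is_adjoint P T D Dstar \<longleftrightarrow>
     (\<forall>h. Dstar h \<in> T \<and> (\<forall>f\<in>T. inner (D f) h = (\<integral>z. f z * Dstar h z \<partial>P)))"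

definition efficient_influence_function ::
  "'z measure \<Rightarrow> 'z measure set \<Rightarrow> 'z measure \<Rightarrow> (('z \<Rightarrow> real) \<Rightarrow> 'h::real_inner) \<Rightarrow> ('z \<Rightarrow> 'h) \<Rightarrow> bool" where
  "efficient_influence_function lam Pm P D \<phi> \<longleftrightarrow>
     (\<exists>Dstar. is_adjoint P (tangent_space lam Pm P) D Dstar \<and>
        (\<forall>h. AE z in P. Dstar h z = inner h (\<phi> z)))"

end

theory Submission
  imports Defs
begin

text \<open>
  Let \<open>p\<close>, \<open>q\<close> be the \<open>\<lambda>\<close>-densities of \<open>P\<close> and \<open>Q = P\<^sub>\<epsilon>\<close>, and \<open>x = (Q - P)\<phi> - \<epsilon> D s\<close>.
  The adjoint relation \<open>\<langle>D s, x\<rangle> = \<integral> s \<langle>\<phi>, x\<rangle> dP\<close> turns \<open>\<langle>x, x\<rangle>\<close> into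
  \<open>\<integral> \<langle>\<phi>, x\<rangle> (q - p - \<epsilon> s p) d\<lambda>\<close>, hence \<open>\<parallel>x\<parallel> \<le> sup \<parallel>\<phi>\<parallel> \<cdot> \<integral> \<bar>q - p - \<epsilon> s p\<bar> d\<lambda>\<close>.
  Write \<open>sqrt q = sqrt p + r + \<epsilon> s sqrt p / 2\<close>; differentiability in quadratic mean says
  \<open>\<integral> r\<^sup>2 d\<lambda> \<le> (e \<epsilon>)\<^sup>2\<close> for small \<open>\<epsilon>\<close>. Expanding the square and bounding the cross term by
  \<open>2 sqrt p \<bar>r\<bar> \<le> t p + r\<^sup>2 / t\<close> with \<open>t = e \<epsilon>\<close> gives
  \<open>\<integral> \<bar>q - p - \<epsilon> s p\<bar> d\<lambda> \<le> 2 e \<epsilon> + 2 e\<^sup>2 \<epsilon>\<^sup>2 + \<epsilon>\<^sup>2 / 2 \<cdot> \<integral> s\<^sup>2 dP\<close>, and \<open>e\<close> is arbitrary.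
  Because the model is mutually equivalent, \<open>\<phi>\<close> may be replaced by a bounded function that
  agrees with it almost everywhere under every \<open>P\<^sub>\<epsilon>\<close>.
\<close>

subsection \<open>Elementary estimates\<close>

lemma abs_square_expansion_le:
  fixes b r u t :: real
  assumes "b \<ge> 0" "t > 0"
  shows "\<bar>(b + r + u)\<^sup>2 - b\<^sup>2 - 2 * u * b\<bar> \<le> t * b\<^sup>2 + (1 / t + 2) * r\<^sup>2 + 2 * u\<^sup>2"
proof -
  have "2 * b * \<bar>r\<bar> \<le> t * b\<^sup>2 + r\<^sup>2 / t"
  proof -
    have "0 \<le> (t * b - \<bar>r\<bar>)\<^sup>2" by simp
    then have "2 * t * b * \<bar>r\<bar> \<le> t\<^sup>2 * b\<^sup>2 + r\<^sup>2"
      by (simp add: power2_eq_square algebra_simps)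
    with \<open>t > 0\<close> show ?thesis by (simp add: field_simps power2_eq_square)
  qed
  moreover have "(r + u)\<^sup>2 \<le> 2 * r\<^sup>2 + 2 * u\<^sup>2"
    using zero_le_power2[of "r - u"] by (simp add: power2_eq_square algebra_simps)
  moreover have "(b + r + u)\<^sup>2 - b\<^sup>2 - 2 * u * b = 2 * b * r + (r + u)\<^sup>2"
    by (simp add: power2_eq_square algebra_simps)
  moreover have "(1 / t + 2) * r\<^sup>2 = r\<^sup>2 / t + 2 * r\<^sup>2"
    by (simp add: field_simps)
  ultimately show ?thesis
    using \<open>b \<ge> 0\<close> abs_triangle_ineq[of "2 * b * r" "(r + u)\<^sup>2"] by (simp add: abs_mult)
qed

lemma abs_linearization_le:
  fixes p q a t :: real
  assumes "p \<ge> 0" "q \<ge> 0" "t > 0"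
  shows "\<bar>q - p - a * p\<bar> \<le> t * p + (1 / t + 2) * (sqrt q - sqrt p - a * sqrt p / 2)\<^sup>2 + a\<^sup>2 / 2 * p"
proof -
  define r where "r = sqrt q - sqrt p - a * sqrt p / 2"
  define u where "u = a * sqrt p / 2"
  have "\<bar>q - p - a * p\<bar> = \<bar>(sqrt p + r + u)\<^sup>2 - (sqrt p)\<^sup>2 - 2 * u * sqrt p\<bar>"
    using assms by (simp add: r_def u_def mult.assoc)
  also have "\<dots> \<le> t * (sqrt p)\<^sup>2 + (1 / t + 2) * r\<^sup>2 + 2 * u\<^sup>2"
    using assms by (intro abs_square_expansion_le) auto
  also have "\<dots> = t * p + (1 / t + 2) * r\<^sup>2 + a\<^sup>2 / 2 * p"
    using assms by (simp add: u_def power_divide power_mult_distrib)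
  finally show ?thesis
    unfolding r_def .
qed

lemma tendsto_zero_at_right_by_slope_bounds:
  fixes N :: "real \<Rightarrow> real" and B :: "real \<Rightarrow> real \<Rightarrow> real"
  assumes N_nonneg: "\<And>\<epsilon>. 0 \<le> N \<epsilon>"
    and N_le: "\<And>e. e > 0 \<Longrightarrow> eventually (\<lambda>\<epsilon>. N \<epsilon> \<le> \<epsilon> * B e \<epsilon>) (at_right 0)"
    and B_lim: "\<And>e. e > 0 \<Longrightarrow> (B e \<longlongrightarrow> K * e) (at_right 0)"
  shows "((\<lambda>\<epsilon>. N \<epsilon> / \<epsilon>) \<longlongrightarrow> 0) (at_right 0)"
proof (rule order_tendstoI)
  fix a :: real assume "a < 0"
  show "eventually (\<lambda>\<epsilon>. a < N \<epsilon> / \<epsilon>) (at_right 0)"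
    using eventually_at_right_less[of 0]
  proof eventually_elim
    case (elim \<epsilon>)
    with divide_nonneg_pos[OF N_nonneg[of \<epsilon>]] \<open>a < 0\<close> show ?case by force
  qed
next
  fix c :: real assume "0 < c"
  define d where "d = \<bar>K\<bar> + 1"
  define e where "e = c / (2 * d)"
  have "d > 0"
    by (simp add: d_def add_nonneg_pos)
  then have "e > 0"
    using \<open>0 < c\<close> by (simp add: e_def)
  have "K * e \<le> d * e"
    using \<open>e > 0\<close> by (intro mult_right_mono) (auto simp: d_def)
  also have "\<dots> = c / 2"
    using \<open>d > 0\<close> by (simp add: e_def)
  also have "\<dots> < c"
    using \<open>0 < c\<close> by simp
  finally have "eventually (\<lambda>\<epsilon>. B e \<epsilon> < c) (at_right 0)"
    by (rule order_tendstoD(2)[OF B_lim[OF \<open>e > 0\<close>]])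
  with N_le[OF \<open>e > 0\<close>] eventually_at_right_less[of 0]
  show "eventually (\<lambda>\<epsilon>. N \<epsilon> / \<epsilon> < c) (at_right 0)"
  proof eventually_elim
    case (elim \<epsilon>)
    then have "N \<epsilon> < \<epsilon> * c"
      by (meson mult_strict_left_mono order.strict_trans1)
    with elim show ?case
      by (simp add: pos_divide_less_eq mult.commute)
  qed
qed

subsection \<open>Bochner integration\<close>

text \<open>
  The library's \<open>integrableI_sequence\<close> and \<open>integrableI_bounded\<close> are stated for the sort
  \<open>banach\<close>, which \<open>{real_inner, complete_space}\<close> does not entail; their arguments only use
  completeness.
\<close>

lemma integrable_of_simple_approx:
  fixes f :: "'a \<Rightarrow> 'b::{real_normed_vector, complete_space, second_countable_topology}"
  assumes f: "f \<in> borel_measurable M"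
    and s: "\<And>i. Bochner_Integration.simple_bochner_integrable M (s i)"
    and err: "(\<lambda>i. \<integral>\<^sup>+x. norm (f x - s i x) \<partial>M) \<longlonglongrightarrow> 0"
  shows "integrable M f"
proof -
  let ?err = "\<lambda>i. \<integral>\<^sup>+x. norm (f x - s i x) \<partial>M"
  let ?I = "\<lambda>i. Bochner_Integration.simple_bochner_integral M (s i)"
  have "Cauchy ?I"
  proof (rule metric_CauchyI)
    fix e :: real assume "0 < e"
    then obtain N where N: "\<And>n. N \<le> n \<Longrightarrow> ?err n < ennreal (e / 2)"
      using order_tendstoD(2)[OF err, of "ennreal (e / 2)"] by (auto simp: eventually_sequentially)
    have "dist (?I m) (?I n) < e" if "N \<le> m" "N \<le> n" for m n
    proof -
      have "ennreal (norm (?I m - ?I n)) \<le> ?err m + ?err n"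
        by (intro simple_bochner_integral_bounded s f)
      also have "\<dots> < ennreal (e / 2) + ennreal (e / 2)"
        using N that by (intro add_strict_mono) auto
      finally show ?thesis
        using \<open>0 < e\<close> by (simp add: dist_norm ennreal_less_iff flip: ennreal_plus)
    qed
    then show "\<exists>N. \<forall>m\<ge>N. \<forall>n\<ge>N. dist (?I m) (?I n) < e" by blast
  qed
  then obtain I where "?I \<longlonglongrightarrow> I"
    using Cauchy_convergent by (auto simp: convergent_def)
  then have "has_bochner_integral M f I"
    using f s err by (rule has_bochner_integral.intros[rotated -1])
  then show ?thesis
    by (rule integrable.intros)
qed

lemma (in finite_measure) integrable_bounded_complete:
  fixes f :: "'a \<Rightarrow> 'b::{real_normed_vector, complete_space, second_countable_topology}"
  assumes f[measurable]: "f \<in> borel_measurable M" and bound: "\<And>x. norm (f x) \<le> C"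
  shows "integrable M f"
proof -
  obtain s where s: "\<And>i. simple_function M (s i)"
    and lim: "\<And>x. x \<in> space M \<Longrightarrow> (\<lambda>i. s i x) \<longlonglongrightarrow> f x"
    and s_f: "\<And>i x. x \<in> space M \<Longrightarrow> norm (s i x) \<le> 2 * norm (f x)"
    using borel_measurable_implies_sequence_metric[OF f, of 0] by simp metis
  have s_bound: "norm (s i x) \<le> 2 * C" if "x \<in> space M" for i x
    using s_f[OF that, of i] bound[of x] by linarith
  have fin: "(\<integral>\<^sup>+x. ennreal (2 * C) \<partial>M) < \<infinity>"
    by (simp add: ennreal_mult_less_top) (simp add: top.not_eq_extremum[symmetric])
  show ?thesis
  proof (rule integrable_of_simple_approx[OF f])
    show "Bochner_Integration.simple_bochner_integrable M (s i)" for i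
    proof (rule simple_bochner_integrableI_bounded[OF s])
      have "(\<integral>\<^sup>+x. norm (s i x) \<partial>M) \<le> (\<integral>\<^sup>+x. ennreal (2 * C) \<partial>M)"
        using s_bound by (intro nn_integral_mono ennreal_leI)
      then show "(\<integral>\<^sup>+x. norm (s i x) \<partial>M) < \<infinity>"
        using fin by (rule le_less_trans)
    qed
    show "(\<lambda>i. \<integral>\<^sup>+x. norm (f x - s i x) \<partial>M) \<longlonglongrightarrow> 0"
    proof (rule nn_integral_dominated_convergence_norm)
      show "\<And>i. s i \<in> borel_measurable M"
        using s by (rule borel_measurable_simple_function)
      show "\<And>i. AE x in M. norm (s i x) \<le> 2 * C"
        using s_bound by (intro AE_I2)
      show "AE x in M. (\<lambda>i. s i x) \<longlonglongrightarrow> f x"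
        using lim by (intro AE_I2)
    qed (use fin in simp_all)
  qed
qed

lemma integrable_mult_bounded:
  fixes f g :: "'a \<Rightarrow> real"
  assumes f: "integrable M f" and g: "g \<in> borel_measurable M" and g_le: "\<And>x. \<bar>g x\<bar> \<le> K"
  shows "integrable M (\<lambda>x. f x * g x)"
proof (rule Bochner_Integration.integrable_bound)
  show "integrable M (\<lambda>x. K * f x)"
    using f by simp
  show "(\<lambda>x. f x * g x) \<in> borel_measurable M"
    using borel_measurable_integrable[OF f] g by measurable
  show "AE x in M. norm (f x * g x) \<le> norm (K * f x)"
  proof (rule AE_I2)
    fix x
    have "\<bar>f x\<bar> * \<bar>g x\<bar> \<le> \<bar>f x\<bar> * K"
      by (rule mult_left_mono[OF g_le]) simp
    then show "norm (f x * g x) \<le> norm (K * f x)"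
      using abs_ge_zero[of "g x"] g_le[of x] by (simp add: abs_mult mult_ac)
  qed
qed

lemma integral_cong_AE_absolutely_continuous:
  assumes "absolutely_continuous M N" "sets N = sets M"
    and "f \<in> borel_measurable M" "g \<in> borel_measurable M" "AE x in M. f x = g x"
  shows "(\<integral>x. f x \<partial>N) = (\<integral>x. g x \<partial>N)"
proof (rule integral_cong_AE)
  show "f \<in> borel_measurable N" "g \<in> borel_measurable N"
    using assms(3,4) by (simp_all add: measurable_cong_sets[OF assms(2) refl])
  show "AE x in N. f x = g x"
    using absolutely_continuous_AE[OF assms(2,1,5)] .
qed

lemma AE_eq_bounded_measurable:
  fixes f :: "'a \<Rightarrow> 'b::{real_normed_vector, second_countable_topology}"
  assumes [measurable]: "f \<in> borel_measurable M" and "AE z in M. norm (f z) \<le> B"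
  obtains g C where "g \<in> borel_measurable M" "\<And>z. norm (g z) \<le> C" "AE z in M. f z = g z"
proof
  show "(\<lambda>z. if norm (f z) \<le> B then f z else 0) \<in> borel_measurable M"
    by measurable
  show "norm (if norm (f z) \<le> B then f z else 0) \<le> max B 0" for z
    by auto
  show "AE z in M. f z = (if norm (f z) \<le> B then f z else 0)"
    using assms(2) by eventually_elim simp
qed

subsection \<open>Densities and the first-order remainder\<close>

lemma dens_nonneg: "0 \<le> dens lam Q z"
  by (simp add: dens_def)

lemma borel_measurable_dens[measurable]: "dens lam Q \<in> borel_measurable lam"
  unfolding dens_def by measurable

lemma
  assumes "sigma_finite_measure lam" "sigma_finite_measure Q" "absolutely_continuous lam Q"
    and "sets Q = sets lam" "f \<in> borel_measurable lam" "integrable Q f"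
  shows integrable_dens_mult: "integrable lam (\<lambda>z. dens lam Q z * f z)"
    and integral_dens_mult: "(\<integral>z. f z \<partial>Q) = (\<integral>z. dens lam Q z * f z \<partial>lam)"
  using sigma_finite_measure.RN_deriv_integrable[OF assms(1-5)]
    sigma_finite_measure.RN_deriv_integral[OF assms(1-5)] assms(6)
  by (simp_all add: dens_def)

lemma
  assumes "sigma_finite_measure lam" "prob_space P" "absolutely_continuous lam P" "sets P = sets lam"
  shows integrable_dens: "integrable lam (dens lam P)"
    and integral_dens: "(\<integral>z. dens lam P z \<partial>lam) = 1"
proof -
  have P_sf: "sigma_finite_measure P"
    using assms(2) by (rule prob_space_imp_sigma_finite)
  have "integrable P (\<lambda>_. 1 :: real)"
    using assms(2) by (simp add: prob_space.finite_measure finite_measure.integrable_const)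
  from integrable_dens_mult[OF assms(1) P_sf assms(3,4) _ this] integral_dens_mult[OF assms(1) P_sf assms(3,4) _ this]
  show "integrable lam (dens lam P)" "(\<integral>z. dens lam P z \<partial>lam) = 1"
    using prob_space.prob_space[OF assms(2)] by (simp_all add: measure_def)
qed

lemma submodelD:
  assumes "submodel lam Pm P s Pe \<delta>"
  shows "s \<in> L2 P" "\<delta> > 0" "\<And>\<epsilon>. \<epsilon> \<in> {0..<\<delta>} \<Longrightarrow> Pe \<epsilon> \<in> Pm"
    and "\<And>e. e > 0 \<Longrightarrow> eventually (\<lambda>\<epsilon>.
           (\<integral>\<^sup>+ z. ennreal ((sqrt (dens lam (Pe \<epsilon>) z) - sqrt (dens lam P z)
                                - \<epsilon> * s z * sqrt (dens lam P z) / 2)\<^sup>2) \<partial>lam)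
             \<le> ennreal ((e * \<epsilon>)\<^sup>2)) (at_right 0)"
  using assms unfolding submodel_def by auto

definition linearization_error ::
  "'z measure \<Rightarrow> 'z measure \<Rightarrow> 'z measure \<Rightarrow> ('z \<Rightarrow> real) \<Rightarrow> real \<Rightarrow> 'z \<Rightarrow> real" where
  "linearization_error lam P Q s \<epsilon> z = dens lam Q z - dens lam P z - \<epsilon> * s z * dens lam P z"

lemma abs_linearization_error_le:
  assumes "t > 0"
  shows "\<bar>linearization_error lam P Q s \<epsilon> z\<bar>
           \<le> t * dens lam P z
             + (1 / t + 2) * (sqrt (dens lam Q z) - sqrt (dens lam P z) - \<epsilon> * s z * sqrt (dens lam P z) / 2)\<^sup>2
             + \<epsilon>\<^sup>2 / 2 * (dens lam P z * (s z)\<^sup>2)"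
proof -
  have "\<bar>linearization_error lam P Q s \<epsilon> z\<bar> = \<bar>dens lam Q z - dens lam P z - (\<epsilon> * s z) * dens lam P z\<bar>"
    by (simp add: linearization_error_def)
  also have "\<dots> \<le> t * dens lam P z
             + (1 / t + 2) * (sqrt (dens lam Q z) - sqrt (dens lam P z) - \<epsilon> * s z * sqrt (dens lam P z) / 2)\<^sup>2
             + (\<epsilon> * s z)\<^sup>2 / 2 * dens lam P z"
    by (rule abs_linearization_le) (simp_all add: dens_nonneg assms)
  also have "\<dots> = t * dens lam P z
             + (1 / t + 2) * (sqrt (dens lam Q z) - sqrt (dens lam P z) - \<epsilon> * s z * sqrt (dens lam P z) / 2)\<^sup>2
             + \<epsilon>\<^sup>2 / 2 * (dens lam P z * (s z)\<^sup>2)"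
    by (simp add: power_mult_distrib)
  finally show ?thesis .
qed

lemma integral_linearization_error_le:
  assumes lam: "sigma_finite_measure lam"
    and P: "prob_space P" "absolutely_continuous lam P" "sets P = sets lam"
    and s[measurable]: "s \<in> borel_measurable lam" and s2: "integrable P (\<lambda>z. (s z)\<^sup>2)"
    and hellinger: "(\<integral>\<^sup>+ z. ennreal ((sqrt (dens lam Q z) - sqrt (dens lam P z)
                       - \<epsilon> * s z * sqrt (dens lam P z) / 2)\<^sup>2) \<partial>lam) \<le> ennreal ((e * \<epsilon>)\<^sup>2)"
    and "e > 0" "\<epsilon> > 0"
  shows "(\<integral>z. \<bar>linearization_error lam P Q s \<epsilon> z\<bar> \<partial>lam)
           \<le> 2 * e * \<epsilon> + 2 * e\<^sup>2 * \<epsilon>\<^sup>2 + \<epsilon>\<^sup>2 / 2 * (\<integral>z. (s z)\<^sup>2 \<partial>P)"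
proof -
  define p where "p = dens lam P"
  define r where "r z = sqrt (dens lam Q z) - sqrt (p z) - \<epsilon> * s z * sqrt (p z) / 2" for z
  define t where "t = e * \<epsilon>"
  have "t > 0"
    using \<open>e > 0\<close> \<open>\<epsilon> > 0\<close> by (simp add: t_def)
  have P_sf: "sigma_finite_measure P"
    using P(1) by (rule prob_space_imp_sigma_finite)
  have p: "integrable lam p" "(\<integral>z. p z \<partial>lam) = 1"
    using integrable_dens[OF lam P] integral_dens[OF lam P] by (simp_all add: p_def)
  have ps: "integrable lam (\<lambda>z. p z * (s z)\<^sup>2)" "(\<integral>z. p z * (s z)\<^sup>2 \<partial>lam) = (\<integral>z. (s z)\<^sup>2 \<partial>P)"
    using integrable_dens_mult[OF lam P_sf P(2,3) _ s2] integral_dens_mult[OF lam P_sf P(2,3) _ s2]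
    by (simp_all add: p_def)
  have r_nn: "(\<integral>\<^sup>+ z. ennreal ((r z)\<^sup>2) \<partial>lam) \<le> ennreal (t\<^sup>2)"
    using hellinger by (simp add: r_def p_def t_def)
  have [measurable]: "r \<in> borel_measurable lam"
    unfolding r_def p_def by measurable
  have r: "integrable lam (\<lambda>z. (r z)\<^sup>2)"
    using r_nn by (intro integrableI_nonneg) (auto simp: top.not_eq_extremum intro: le_less_trans)
  have r_le: "(\<integral>z. (r z)\<^sup>2 \<partial>lam) \<le> t\<^sup>2"
    using r_nn nn_integral_eq_integral[OF r] by simp
  define bd where "bd z = t * p z + (1 / t + 2) * (r z)\<^sup>2 + \<epsilon>\<^sup>2 / 2 * (p z * (s z)\<^sup>2)" for z
  have "\<bar>linearization_error lam P Q s \<epsilon> z\<bar> \<le> bd z" "0 \<le> bd z" for z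
    using abs_linearization_error_le[OF \<open>t > 0\<close>] \<open>t > 0\<close> by (simp_all add: bd_def r_def p_def dens_nonneg)
  then have "(\<integral>z. \<bar>linearization_error lam P Q s \<epsilon> z\<bar> \<partial>lam) \<le> (\<integral>z. bd z \<partial>lam)"
    using p(1) r ps(1) by (intro integral_mono') (auto simp: bd_def)
  also have "\<dots> = t + (1 / t + 2) * (\<integral>z. (r z)\<^sup>2 \<partial>lam) + \<epsilon>\<^sup>2 / 2 * (\<integral>z. (s z)\<^sup>2 \<partial>P)"
    using p r ps by (simp add: bd_def)
  also have "\<dots> \<le> t + (1 / t + 2) * t\<^sup>2 + \<epsilon>\<^sup>2 / 2 * (\<integral>z. (s z)\<^sup>2 \<partial>P)"
    using r_le \<open>t > 0\<close> by (intro add_mono mult_left_mono order_refl) auto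
  also have "\<dots> = 2 * e * \<epsilon> + 2 * e\<^sup>2 * \<epsilon>\<^sup>2 + \<epsilon>\<^sup>2 / 2 * (\<integral>z. (s z)\<^sup>2 \<partial>P)"
    using \<open>t > 0\<close> by (simp add: t_def field_simps power2_eq_square)
  finally show ?thesis .
qed

lemma integrable_linearization_error:
  assumes lam: "sigma_finite_measure lam"
    and P: "prob_space P" "absolutely_continuous lam P" "sets P = sets lam"
    and Q: "prob_space Q" "absolutely_continuous lam Q" "sets Q = sets lam"
    and s: "s \<in> borel_measurable lam" "integrable P s"
  shows "integrable lam (linearization_error lam P Q s \<epsilon>)"
proof -
  have "integrable lam (dens lam Q)" "integrable lam (dens lam P)"
    using integrable_dens lam P Q by blast+
  moreover have "integrable lam (\<lambda>z. dens lam P z * s z)"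
    using integrable_dens_mult[OF lam prob_space_imp_sigma_finite[OF P(1)] P(2,3) s] .
  ultimately show ?thesis
    unfolding linearization_error_def by (simp add: mult.commute mult.left_commute)
qed

lemma inner_integral_diff_eq_integral_linearization_error:
  fixes \<psi> :: "'z \<Rightarrow> 'h::{real_inner, complete_space, second_countable_topology}"
  assumes lam: "sigma_finite_measure lam"
    and P: "prob_space P" "absolutely_continuous lam P" "sets P = sets lam"
    and Q: "prob_space Q" "absolutely_continuous lam Q" "sets Q = sets lam"
    and \<psi>[measurable]: "\<psi> \<in> borel_measurable lam" and \<psi>_le: "\<And>z. norm (\<psi> z) \<le> C"
    and s[measurable]: "s \<in> borel_measurable lam" and s_int: "integrable P s"
    and adj: "inner Ds y = (\<integral>z. s z * inner (\<psi> z) y \<partial>P)"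
  shows "inner ((\<integral>z. \<psi> z \<partial>Q) - (\<integral>z. \<psi> z \<partial>P) - \<epsilon> *\<^sub>R Ds) y
           = (\<integral>z. linearization_error lam P Q s \<epsilon> z * inner (\<psi> z) y \<partial>lam)"
proof -
  interpret P: prob_space P by fact
  interpret Q: prob_space Q by fact
  have P_sf: "sigma_finite_measure P" and Q_sf: "sigma_finite_measure Q"
    using P(1) Q(1) by (simp_all add: prob_space_imp_sigma_finite)
  define g where "g = (\<lambda>z. inner (\<psi> z) y)"
  have [measurable]: "g \<in> borel_measurable lam"
    unfolding g_def by measurable
  have "\<psi> \<in> borel_measurable Q" "\<psi> \<in> borel_measurable P"
    by (simp_all add: measurable_cong_sets[OF P(3) refl] measurable_cong_sets[OF Q(3) refl])
  then have \<psi>_int: "integrable Q \<psi>" "integrable P \<psi>"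
    using Q.integrable_bounded_complete P.integrable_bounded_complete \<psi>_le by blast+
  then have g_int: "integrable Q g" "integrable P g"
    by (simp_all add: g_def)
  have "\<bar>g z\<bar> \<le> C * norm y" for z
    using Cauchy_Schwarz_ineq2[of "\<psi> z" y] \<psi>_le[of z]
    by (simp add: g_def) (meson mult_right_mono norm_ge_zero order_trans)
  then have sg_int: "integrable P (\<lambda>z. s z * g z)"
    by (intro integrable_mult_bounded[OF s_int]) (simp_all add: measurable_cong_sets[OF P(3) refl])
  have "inner ((\<integral>z. \<psi> z \<partial>Q) - (\<integral>z. \<psi> z \<partial>P) - \<epsilon> *\<^sub>R Ds) y
          = (\<integral>z. g z \<partial>Q) - (\<integral>z. g z \<partial>P) - \<epsilon> * (\<integral>z. s z * g z \<partial>P)"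
    using \<psi>_int by (simp add: inner_diff_left adj g_def)
  also have "\<dots> = (\<integral>z. dens lam Q z * g z \<partial>lam) - (\<integral>z. dens lam P z * g z \<partial>lam)
                   - \<epsilon> * (\<integral>z. dens lam P z * (s z * g z) \<partial>lam)"
    using integral_dens_mult[OF lam Q_sf Q(2,3) _ g_int(1)] integral_dens_mult[OF lam P_sf P(2,3) _ g_int(2)]
      integral_dens_mult[OF lam P_sf P(2,3) _ sg_int] by simp
  also have "\<dots> = (\<integral>z. linearization_error lam P Q s \<epsilon> z * g z \<partial>lam)"
    using integrable_dens_mult[OF lam Q_sf Q(2,3) _ g_int(1)] integrable_dens_mult[OF lam P_sf P(2,3) _ g_int(2)]
      integrable_dens_mult[OF lam P_sf P(2,3) _ sg_int]
    by (simp add: linearization_error_def algebra_simps)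
  finally show ?thesis
    by (simp only: g_def)
qed

lemma norm_le_integral_linearization_error:
  fixes \<psi> :: "'z \<Rightarrow> 'h::{real_inner, complete_space, second_countable_topology}"
  assumes lam: "sigma_finite_measure lam"
    and P: "prob_space P" "absolutely_continuous lam P" "sets P = sets lam"
    and Q: "prob_space Q" "absolutely_continuous lam Q" "sets Q = sets lam"
    and \<psi>: "\<psi> \<in> borel_measurable lam" "\<And>z. norm (\<psi> z) \<le> C"
    and s: "s \<in> borel_measurable lam" "integrable P s"
    and adj: "\<And>y. inner Ds y = (\<integral>z. s z * inner (\<psi> z) y \<partial>P)"
  shows "norm ((\<integral>z. \<psi> z \<partial>Q) - (\<integral>z. \<psi> z \<partial>P) - \<epsilon> *\<^sub>R Ds)
           \<le> C * (\<integral>z. \<bar>linearization_error lam P Q s \<epsilon> z\<bar> \<partial>lam)"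
    (is "norm ?x \<le> C * ?L")
proof -
  let ?err = "linearization_error lam P Q s \<epsilon>"
  have "0 \<le> C"
    using norm_ge_zero[of "\<psi> undefined"] \<psi>(2)[of undefined] by linarith
  have "(norm ?x)\<^sup>2 = (\<integral>z. ?err z * inner (\<psi> z) ?x \<partial>lam)"
    unfolding power2_norm_eq_inner
    by (rule inner_integral_diff_eq_integral_linearization_error[OF lam P Q \<psi> s adj])
  also have "\<dots> \<le> (\<integral>z. \<bar>?err z\<bar> * (C * norm ?x) \<partial>lam)"
  proof (rule integral_mono')
    show "integrable lam (\<lambda>z. \<bar>?err z\<bar> * (C * norm ?x))"
      using integrable_linearization_error[OF lam P Q s] by simp
    fix z
    have "?err z * inner (\<psi> z) ?x \<le> \<bar>?err z\<bar> * (norm (\<psi> z) * norm ?x)"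
      using abs_ge_self[of "?err z * inner (\<psi> z) ?x"] Cauchy_Schwarz_ineq2[of "\<psi> z" ?x]
      by (simp add: abs_mult) (meson abs_ge_zero mult_left_mono order_trans)
    also have "\<dots> \<le> \<bar>?err z\<bar> * (C * norm ?x)"
      using \<psi>(2)[of z] by (intro mult_left_mono mult_right_mono) auto
    finally show "?err z * inner (\<psi> z) ?x \<le> \<bar>?err z\<bar> * (C * norm ?x)" .
  qed (use \<open>0 \<le> C\<close> in simp)
  also have "\<dots> = norm ?x * (C * ?L)"
    by (simp add: mult_ac)
  finally have "norm ?x * norm ?x \<le> norm ?x * (C * ?L)"
    by (simp add: power2_eq_square)
  moreover have "0 \<le> C * ?L"
    using \<open>0 \<le> C\<close> by simp
  ultimately show ?thesis
    by (cases "norm ?x = 0") (auto simp: mult_le_cancel_left_pos)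
qed

lemma norm_integral_diff_le_hellinger:
  fixes \<psi> :: "'z \<Rightarrow> 'h::{real_inner, complete_space, second_countable_topology}"
  assumes lam: "sigma_finite_measure lam"
    and P: "prob_space P" "absolutely_continuous lam P" "sets P = sets lam"
    and Q: "prob_space Q" "absolutely_continuous lam Q" "sets Q = sets lam"
    and \<psi>: "\<psi> \<in> borel_measurable lam" "\<And>z. norm (\<psi> z) \<le> C"
    and s: "s \<in> borel_measurable lam" "integrable P (\<lambda>z. (s z)\<^sup>2)"
    and adj: "\<And>y. inner Ds y = (\<integral>z. s z * inner (\<psi> z) y \<partial>P)"
    and hellinger: "(\<integral>\<^sup>+ z. ennreal ((sqrt (dens lam Q z) - sqrt (dens lam P z)
                       - \<epsilon> * s z * sqrt (dens lam P z) / 2)\<^sup>2) \<partial>lam) \<le> ennreal ((e * \<epsilon>)\<^sup>2)"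
    and "e > 0" "\<epsilon> > 0"
  shows "norm ((\<integral>z. \<psi> z \<partial>Q) - (\<integral>z. \<psi> z \<partial>P) - \<epsilon> *\<^sub>R Ds)
           \<le> \<epsilon> * (C * (2 * e + 2 * e\<^sup>2 * \<epsilon> + \<epsilon> / 2 * (\<integral>z. (s z)\<^sup>2 \<partial>P)))"
proof -
  have "s \<in> borel_measurable P"
    using s(1) by (simp add: measurable_cong_sets[OF P(3) refl])
  then have "integrable P s"
    using s(2) by (rule finite_measure.square_integrable_imp_integrable[OF prob_space.finite_measure[OF P(1)]])
  have "0 \<le> C"
    using norm_ge_zero[of "\<psi> undefined"] \<psi>(2)[of undefined] by linarith
  have "norm ((\<integral>z. \<psi> z \<partial>Q) - (\<integral>z. \<psi> z \<partial>P) - \<epsilon> *\<^sub>R Ds)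
          \<le> C * (\<integral>z. \<bar>linearization_error lam P Q s \<epsilon> z\<bar> \<partial>lam)"
    using norm_le_integral_linearization_error[OF lam P Q \<psi> s(1) \<open>integrable P s\<close> adj] .
  also have "\<dots> \<le> C * (2 * e * \<epsilon> + 2 * e\<^sup>2 * \<epsilon>\<^sup>2 + \<epsilon>\<^sup>2 / 2 * (\<integral>z. (s z)\<^sup>2 \<partial>P))"
    using integral_linearization_error_le[OF lam P s hellinger \<open>e > 0\<close> \<open>\<epsilon> > 0\<close>] \<open>0 \<le> C\<close>
    by (rule mult_left_mono)
  also have "\<dots> = \<epsilon> * (C * (2 * e + 2 * e\<^sup>2 * \<epsilon> + \<epsilon> / 2 * (\<integral>z. (s z)\<^sup>2 \<partial>P)))"
    by (simp add: power2_eq_square algebra_simps)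
  finally show ?thesis .
qed

lemma submodel_integral_expansion:
  fixes \<psi> :: "'z \<Rightarrow> 'h::{real_inner, complete_space, second_countable_topology}"
  assumes lam: "sigma_finite_measure lam"
    and model: "\<And>Q. Q \<in> Pm \<Longrightarrow> prob_space Q \<and> absolutely_continuous lam Q \<and> sets Q = sets lam"
    and P: "P \<in> Pm" and sub: "submodel lam Pm P s Pe \<delta>"
    and \<psi>: "\<psi> \<in> borel_measurable lam" "\<And>z. norm (\<psi> z) \<le> C"
    and adj: "\<And>y. inner Ds y = (\<integral>z. s z * inner (\<psi> z) y \<partial>P)"
  shows "((\<lambda>\<epsilon>. norm ((\<integral>z. \<psi> z \<partial>(Pe \<epsilon>)) - (\<integral>z. \<psi> z \<partial>P) - \<epsilon> *\<^sub>R Ds) / \<epsilon>) \<longlongrightarrow> 0) (at_right 0)"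
proof (rule tendsto_zero_at_right_by_slope_bounds[where K = "2 * C"])
  have s: "s \<in> borel_measurable lam" "integrable P (\<lambda>z. (s z)\<^sup>2)"
    using submodelD(1)[OF sub] model[OF P] by (auto simp: L2_def measurable_cong_sets[of P lam])
  let ?S = "\<integral>z. (s z)\<^sup>2 \<partial>P"
  fix e :: real assume "e > 0"
  have "((\<lambda>\<epsilon>. C * (2 * e + 2 * e\<^sup>2 * \<epsilon> + \<epsilon> / 2 * ?S))
          \<longlongrightarrow> C * (2 * e + 2 * e\<^sup>2 * 0 + 0 / 2 * ?S)) (at_right 0)"
    by (intro tendsto_intros) simp
  then show "((\<lambda>\<epsilon>. C * (2 * e + 2 * e\<^sup>2 * \<epsilon> + \<epsilon> / 2 * ?S)) \<longlongrightarrow> 2 * C * e) (at_right 0)"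
    by (simp add: mult_ac)
  show "eventually (\<lambda>\<epsilon>. norm ((\<integral>z. \<psi> z \<partial>(Pe \<epsilon>)) - (\<integral>z. \<psi> z \<partial>P) - \<epsilon> *\<^sub>R Ds)
          \<le> \<epsilon> * (C * (2 * e + 2 * e\<^sup>2 * \<epsilon> + \<epsilon> / 2 * ?S))) (at_right 0)"
    using submodelD(4)[OF sub \<open>e > 0\<close>] eventually_at_right_real[OF submodelD(2)[OF sub]]
  proof eventually_elim
    case (elim \<epsilon>)
    then have "Pe \<epsilon> \<in> Pm" "\<epsilon> > 0"
      using submodelD(3)[OF sub] by auto
    with elim(1) show ?case
      using norm_integral_diff_le_hellinger[OF lam _ _ _ _ _ _ \<psi> s adj] model[OF P] model[OF \<open>Pe \<epsilon> \<in> Pm\<close>] \<open>e > 0\<close>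
      by blast
  qed
qed simp

subsection \<open>Efficient influence functions\<close>

lemma efficient_influence_function_AE_cong:
  assumes "efficient_influence_function lam Pm P D \<phi>" "AE z in P. \<phi> z = \<psi> z"
  shows "efficient_influence_function lam Pm P D \<psi>"
proof -
  obtain Dstar where "is_adjoint P (tangent_space lam Pm P) D Dstar"
    and "\<And>h. AE z in P. Dstar h z = inner h (\<phi> z)"
    using assms(1) unfolding efficient_influence_function_def by blast
  moreover have "AE z in P. Dstar h z = inner h (\<psi> z)" if "AE z in P. Dstar h z = inner h (\<phi> z)" for h
    using that assms(2) by eventually_elim simp
  ultimately show ?thesis
    unfolding efficient_influence_function_def by blast
qed

lemma inner_derivative_eq_integral_eif:
  fixes \<phi> :: "'z \<Rightarrow> 'h::{real_inner, second_countable_topology}"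
  assumes "efficient_influence_function lam Pm P D \<phi>" "\<phi> \<in> borel_measurable P"
    and "f \<in> tangent_space lam Pm P"
  shows "inner (D f) h = (\<integral>z. f z * inner (\<phi> z) h \<partial>P)"
proof -
  obtain Dstar where adj: "is_adjoint P (tangent_space lam Pm P) D Dstar"
    and eif: "AE z in P. Dstar h z = inner h (\<phi> z)"
    using assms(1) unfolding efficient_influence_function_def by blast
  have "Dstar h \<in> tangent_space lam Pm P" and D: "inner (D f) h = (\<integral>z. f z * Dstar h z \<partial>P)"
    using adj assms(3) unfolding is_adjoint_def by auto
  then have [measurable]: "Dstar h \<in> borel_measurable P" "f \<in> borel_measurable P"
    using assms(3) by (auto simp: tangent_space_def L2_def)
  have [measurable]: "\<phi> \<in> borel_measurable P"
    by fact
  have "AE z in P. f z * Dstar h z = f z * inner (\<phi> z) h"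
    using eif by eventually_elim (simp add: inner_commute)
  then show ?thesis
    unfolding D by (rule integral_cong_AE[rotated 2]) measurable
qed

lemma tangent_set_subset_tangent_space: "tangent_set lam Pm P \<subseteq> tangent_space lam Pm P"
proof
  fix s assume s: "s \<in> tangent_set lam Pm P"
  then have "s \<in> lin_span (tangent_set lam Pm P)"
    unfolding lin_span_def by (intro CollectI exI[of _ 1] exI[of _ "\<lambda>_. 1"] exI[of _ "\<lambda>_. s"]) auto
  moreover have "l2norm P (\<lambda>z. s z - s z) = 0"
    by (simp add: l2norm_def)
  ultimately show "s \<in> tangent_space lam Pm P"
    using s unfolding tangent_space_def tangent_set_def by force
qed

theorem lemmaS5:
  fixes lam :: "'z::polish_space measure"
    and Pm :: "'z measure set"
    and \<nu> :: "'z measure \<Rightarrow> 'h::{real_inner, complete_space, second_countable_topology}"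
    and P :: "'z measure"
    and s :: "'z \<Rightarrow> real"
    and Pe :: "real \<Rightarrow> 'z measure"
    and \<delta> :: real
    and D :: "('z \<Rightarrow> real) \<Rightarrow> 'h"
    and \<phi> :: "'z \<Rightarrow> 'h"
  assumes lam: "sigma_finite_measure lam" "sets lam = sets borel"
    and model: "\<forall>Q\<in>Pm. prob_space Q \<and> sets Q = sets borel \<and> absolutely_continuous lam Q"
    and equiv: "\<forall>P1\<in>Pm. \<forall>P2\<in>Pm. absolutely_continuous P1 P2 \<and> absolutely_continuous P2 P1"
    and P: "P \<in> Pm"
    and sub: "submodel lam Pm P s Pe \<delta>"
    and diff: "pathwise_derivative lam Pm \<nu> P D"
    and eif: "efficient_influence_function lam Pm P D \<phi>"
    and meas: "\<phi> \<in> borel_measurable P"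
    and bdd: "\<exists>B. AE z in P. norm (\<phi> z) \<le> B"
  shows "((\<lambda>\<epsilon>. norm ((\<integral>z. \<phi> z \<partial>(Pe \<epsilon>)) - (\<integral>z. \<phi> z \<partial>P) - \<epsilon> *\<^sub>R D s) / \<epsilon>)
            \<longlongrightarrow> 0) (at_right 0)"
proof -
  have model': "prob_space Q \<and> absolutely_continuous lam Q \<and> sets Q = sets lam" if "Q \<in> Pm" for Q
    using model that lam(2) by auto
  from bdd obtain B where "AE z in P. norm (\<phi> z) \<le> B" ..
  then obtain \<psi> C where \<psi>: "\<psi> \<in> borel_measurable P" "\<And>z. norm (\<psi> z) \<le> C"
    and \<phi>_eq: "AE z in P. \<phi> z = \<psi> z"
    using AE_eq_bounded_measurable[OF meas] by blast
  have integral_\<phi>: "(\<integral>z. \<phi> z \<partial>Q) = (\<integral>z. \<psi> z \<partial>Q)" if "Q \<in> Pm" for Q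
    using integral_cong_AE_absolutely_continuous[OF _ _ meas \<psi>(1) \<phi>_eq] equiv model' that P by auto
  have "s \<in> tangent_space lam Pm P"
    using tangent_set_subset_tangent_space[of lam Pm P] sub submodelD(1)[OF sub]
    unfolding tangent_set_def by blast
  then have adj: "inner (D s) y = (\<integral>z. s z * inner (\<psi> z) y \<partial>P)" for y
    by (rule inner_derivative_eq_integral_eif[OF efficient_influence_function_AE_cong[OF eif \<phi>_eq] \<psi>(1)])
  have "\<psi> \<in> borel_measurable lam"
    using \<psi>(1) model'[OF P] by (simp add: measurable_cong_sets[of P lam])
  from submodel_integral_expansion[OF lam(1) model' P sub this \<psi>(2) adj]
  show ?thesis
  proof (rule Lim_transform_eventually)
    show "eventually (\<lambda>\<epsilon>. norm ((\<integral>z. \<psi> z \<partial>(Pe \<epsilon>)) - (\<integral>z. \<psi> z \<partial>P) - \<epsilon> *\<^sub>R D s) / \<epsilon>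
            = norm ((\<integral>z. \<phi> z \<partial>(Pe \<epsilon>)) - (\<integral>z. \<phi> z \<partial>P) - \<epsilon> *\<^sub>R D s) / \<epsilon>) (at_right 0)"
      using eventually_at_right_real[OF submodelD(2)[OF sub]]
      by eventually_elim (simp add: integral_\<phi> submodelD(3)[OF sub] P)
  qed
qed

end
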